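(* Let $\mathcal A$ be an ordered normed algebra with unit $e$ whose algebra cone $\mathcal A^+$ is normal and closed (in the norm topology). Let $a,b\in\mathcal A$ with at least one of them positive. Then there exists $\delta>0$ such that there is no $x\in\mathcal A$ with $\|x\|<\delta$ and $ab-ba\geq e+x$.
   Context: A normed algebra $\mathcal A$ (real or complex, with submultiplicative norm) with unit $e$. A cone is a nonempty subset $\mathcal A^+\subseteq\mathcal A$ with $\mathcal A^++\mathcal A^+\subseteq\mathcal A^+$, $\lambda\mathcal A^+\subseteq\mathcal A^+$ for all $\lambda\geq 0$, and $\mathcal A^+\cap(-\mathcal A^+)=\{0\}$; it induces the partial order $a\leq b \iff b-a\in\mathcal A^+$. Elements of $\mathcal A^+$ are called positive. The cone is an algebra cone if $\mathcal A^+\cdot\mathcal A^+\subseteq\mathcal A^+$ and $e\in\mathcal A^+$; then $\mathcal A$ is called an ordered normed algebra. The cone is normal if there is a constant $\alpha>0$ such that $0\leq x\leq y$ implies $\|x\|\leq\alpha\|y\|$. *)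

theory Defs
  imports "HOL-Analysis.Analysis"
begin

definition cone :: "'a::real_vector set \<Rightarrow> bool" where
  "cone C \<longleftrightarrow> C \<noteq> {} \<and> (\<forall>x\<in>C. \<forall>y\<in>C. x + y \<in> C)
     \<and> (\<forall>x\<in>C. \<forall>l::real. l \<ge> 0 \<longrightarrow> l *\<^sub>R x \<in> C)
     \<and> C \<inter> uminus ` C = {0}"

definition algebra_cone :: "'a::{real_algebra, ring_1} set \<Rightarrow> bool" where
  "algebra_cone C \<longleftrightarrow> cone C \<and> (\<forall>x\<in>C. \<forall>y\<in>C. x * y \<in> C) \<and> 1 \<in> C"

text \<open>Normality: \<open>0 \<le> x \<le> y\<close> (i.e. \<open>x \<in> C\<close>, \<open>y - x \<in> C\<close>) implies \<open>norm x \<le> \<alpha> * norm y\<close>.\<close>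
definition normal_cone :: "'a::real_normed_vector set \<Rightarrow> bool" where
  "normal_cone C \<longleftrightarrow> (\<exists>\<alpha>>0. \<forall>x y. x \<in> C \<and> y - x \<in> C \<longrightarrow> norm x \<le> \<alpha> * norm y)"

end

theory Submission
  imports Defs
begin

text \<open>If \<open>p \<ge> 0\<close> and \<open>pq - qp \<ge> 1\<close>, induction gives \<open>p\<^sup>n\<^sup>+\<^sup>1q - qp\<^sup>n\<^sup>+\<^sup>1 \<ge> (n+1) p\<^sup>n \<ge> 0\<close>, so
  normality yields \<open>(n+1) \<parallel>p\<^sup>n\<parallel> \<le> 2\<alpha>\<parallel>q\<parallel>\<parallel>p\<^sup>n\<^sup>+\<^sup>1\<parallel> \<le> 2\<alpha>\<parallel>q\<parallel>\<parallel>p\<parallel>\<parallel>p\<^sup>n\<parallel>\<close>. For large \<open>n\<close> this forces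
  \<open>p\<^sup>n = 0\<close>, and the same inequality then propagates \<open>p\<^sup>n = 0\<close> down to \<open>p\<^sup>0 = 1\<close>,
  which is absurd. Hence \<open>ab - ba - e\<close> lies outside the cone (for \<open>b \<ge> 0\<close> use the pair
  \<open>b, -a\<close>), and since the cone is closed, so does \<open>ab - ba - (e + x)\<close> for all small \<open>x\<close>.\<close>

lemma algebra_cone_power:
  assumes "algebra_cone C" and "p \<in> C"
  shows "p ^ n \<in> C"
  using assms by (induction n) (auto simp: algebra_cone_def)

lemma algebra_cone_commutator_power:
  fixes C :: "'a::{real_algebra, ring_1} set"
  assumes C: "algebra_cone C" and p: "p \<in> C" and comm: "p * q - q * p - 1 \<in> C"
  shows "p ^ Suc n * q - q * p ^ Suc n - real (Suc n) *\<^sub>R p ^ n \<in> C"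
proof (induction n)
  case 0
  then show ?case using comm by simp
next
  case (Suc n)
  define u where "u = p ^ Suc n * q - q * p ^ Suc n - real (Suc n) *\<^sub>R p ^ n"
  have "p ^ Suc (Suc n) * q - q * p ^ Suc (Suc n) - real (Suc (Suc n)) *\<^sub>R p ^ Suc n
      = p * u + (p * q - q * p - 1) * p ^ Suc n"
    unfolding u_def
    by (simp add: algebra_simps scaleR_conv_of_real mult.assoc power_commutes scaleR_2)
  moreover have "p * u + (p * q - q * p - 1) * p ^ Suc n \<in> C"
    using Suc comm p algebra_cone_power[OF C p] C
    unfolding u_def algebra_cone_def cone_def by blast
  ultimately show ?case by simp
qed

lemma norm_commutator_le:
  fixes p q :: "'a::real_normed_algebra"
  shows "norm (p * q - q * p) \<le> 2 * norm q * norm p"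
proof -
  have "norm (p * q - q * p) \<le> norm (p * q) + norm (q * p)"
    by (rule norm_triangle_ineq4)
  also have "\<dots> \<le> norm p * norm q + norm q * norm p"
    by (intro add_mono norm_mult_ineq)
  finally show ?thesis by (simp add: algebra_simps)
qed

lemma power_eq_zero_descent:
  fixes p :: "'a::{real_normed_algebra, ring_1}"
  assumes growth: "\<And>n. real (Suc n) * norm (p ^ n) \<le> K * norm (p ^ Suc n)"
    and "p ^ n = 0"
  shows False
proof -
  have zero_down: "p ^ k = 0" if "p ^ Suc k = 0" for k
    using growth[of k] that by (simp add: mult_le_0_iff)
  from \<open>p ^ n = 0\<close> have "p ^ 0 = 0"
    by (induction n) (use zero_down in blast)+
  then show False by simp
qed

lemma power_growth_contradiction:
  fixes p :: "'a::{real_normed_algebra, ring_1}"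
  assumes growth: "\<And>n. real (Suc n) * norm (p ^ n) \<le> K * norm (p ^ Suc n)"
  shows False
proof -
  obtain N :: nat where N: "real N > K * norm p"
    using reals_Archimedean2 by blast
  have "0 < K * norm p"
    using growth[of 0] less_le_trans[of 0 "norm (1::'a)"] by simp
  then have "K \<ge> 0"
    by (simp add: zero_less_mult_iff)
  then have "K * norm (p ^ Suc N) \<le> K * norm p * norm (p ^ N)"
    by (simp add: mult_left_mono norm_mult_ineq mult.assoc)
  with growth[of N] have "(real (Suc N) - K * norm p) * norm (p ^ N) \<le> 0"
    by (simp add: algebra_simps)
  with N have "p ^ N = 0"
    by (simp add: mult_le_0_iff)
  then show False
    using power_eq_zero_descent[OF growth] by blast
qed

lemma normal_algebra_cone_commutator_not_ge_one:
  fixes C :: "'a::{real_normed_algebra, ring_1} set"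
  assumes C: "algebra_cone C" and "normal_cone C" and p: "p \<in> C"
  shows "p * q - q * p - 1 \<notin> C"
proof
  assume comm: "p * q - q * p - 1 \<in> C"
  obtain \<alpha> where "\<alpha> > 0"
    and normal: "\<And>x y. x \<in> C \<Longrightarrow> y - x \<in> C \<Longrightarrow> norm x \<le> \<alpha> * norm y"
    using \<open>normal_cone C\<close> unfolding normal_cone_def by blast
  have "real (Suc n) * norm (p ^ n) \<le> (2 * \<alpha> * norm q) * norm (p ^ Suc n)" for n
  proof -
    have "real (Suc n) *\<^sub>R p ^ n \<in> C"
      using C algebra_cone_power[OF C p] unfolding algebra_cone_def cone_def by simp
    then have "norm (real (Suc n) *\<^sub>R p ^ n) \<le> \<alpha> * norm (p ^ Suc n * q - q * p ^ Suc n)"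
      using normal algebra_cone_commutator_power[OF C p comm] by blast
    also have "\<dots> \<le> \<alpha> * (2 * norm q * norm (p ^ Suc n))"
      using \<open>\<alpha> > 0\<close> norm_commutator_le by (intro mult_left_mono) auto
    finally show ?thesis by (simp add: mult.assoc)
  qed
  then show False
    by (rule power_growth_contradiction)
qed

lemma closed_mem_of_approx:
  fixes C :: "'a::real_normed_vector set"
  assumes "closed C" and approx: "\<And>\<delta>. \<delta> > 0 \<Longrightarrow> \<exists>x. norm x < \<delta> \<and> y - x \<in> C"
  shows "y \<in> C"
proof -
  have "y \<in> closure C"
    unfolding closure_approachable
  proof (intro allI impI)
    fix e :: real
    assume "e > 0"
    then obtain x where "norm x < e" "y - x \<in> C"
      using approx by blast
    then show "\<exists>z\<in>C. dist z y < e"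
      by (intro bexI[of _ "y - x"]) (auto simp: dist_norm)
  qed
  then show ?thesis
    using \<open>closed C\<close> by (simp add: closure_closed)
qed

theorem corollary2p3:
  fixes C :: "'a::{real_normed_algebra, ring_1} set" and a b :: 'a
  assumes "algebra_cone C" and "normal_cone C" and "closed C"
    and "a \<in> C \<or> b \<in> C"
  shows "\<exists>\<delta>>0. \<not> (\<exists>x. norm x < \<delta> \<and> a * b - b * a - (1 + x) \<in> C)"
proof (rule ccontr)
  assume "\<not> ?thesis"
  then have "\<exists>x. norm x < \<delta> \<and> (a * b - b * a - 1) - x \<in> C" if "\<delta> > 0" for \<delta>
    using that by (simp add: algebra_simps)
  then have comm: "a * b - b * a - 1 \<in> C"
    using closed_mem_of_approx[OF \<open>closed C\<close>] by blast
  from \<open>a \<in> C \<or> b \<in> C\<close> show False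
  proof
    assume "a \<in> C"
    then show False
      using normal_algebra_cone_commutator_not_ge_one[OF assms(1,2)] comm by blast
  next
    assume "b \<in> C"
    then show False
      using normal_algebra_cone_commutator_not_ge_one[OF assms(1,2), of b "- a"] comm by simp
  qed
qed

end
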